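(* Let $\xi_k=I_k-(\theta(M_k)-\theta(M_{k-1}))$ for $k\ge1$. There is a positive constant $C$ such that: (a) if $\delta<0$ and $\limsup_k r_k<1$, then $E[|\xi_k|^3\mid\mathcal{F}_{k-1}]\le C\,y_{M_{k-1}}$ for all $k\ge1$; (b) if $\delta<0$, $\lim_k r_k=1$ and $\lim_k(1-r_k)/(1-r_{k-1})=1$, then $E[|\xi_k|^3\mid\mathcal{F}_{k-1}]\le C\,y_{M_{k-1}+3\delta}$ for all $k\ge1$; (c) if $\delta>0$, then $E[|\xi_k|^3\mid\mathcal{F}_{k-1}]\le C\,y_{M_{k-1}+\delta}$ for all $k\ge1$.
   Context: Let $\{X_n,n\ge1\}$ be independent, identically distributed random variables with values in $\mathbb{Z}_+=\{0,1,2,\dots\}$ such that $p_k=P[X_1=k]>0$ for every $k\in\mathbb{Z}_+$ (set $p_m=0$ for integers $m\le -1$). For $k\in\mathbb{Z}_+$ let $y_k=\sum_{i>k}p_i$, and set $y_m=1$ for integers $m\le-1$. Let $r_k=p_k/y_{k-1}$, $k\in\mathbb{Z}_+$. Fix an integer $\delta$ and define $s_k=p_{k+\delta}/y_{k-1}$ and $\theta(k)=\sum_{i=0}^k s_i$ for $k\in\mathbb{Z}_+$. Let $M_0=0$ and $M_n=\max\{X_1,\dots,X_n\}$ for $n\ge1$. Let $I_k=\mathbf{1}_{\{X_k>M_{k-1}+\delta\}}$. Let $\mathcal{F}_0=\{\emptyset,\Omega\}$ and $\mathcal{F}_n=\sigma(X_1,\dots,X_n)$ for $n\ge1$. *)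

theory Defs
  imports "HOL-Probability.Probability"
begin

definition pz :: "(nat \<Rightarrow> real) \<Rightarrow> int \<Rightarrow> real" where
  "pz p m = (if m < 0 then 0 else p (nat m))"

definition ytail :: "(nat \<Rightarrow> real) \<Rightarrow> int \<Rightarrow> real" where
  "ytail p m = (if m < 0 then 1 else (\<Sum>i. p (nat m + 1 + i)))"

definition rr :: "(nat \<Rightarrow> real) \<Rightarrow> nat \<Rightarrow> real" where
  "rr p k = p k / ytail p (int k - 1)"

definition ss :: "(nat \<Rightarrow> real) \<Rightarrow> int \<Rightarrow> nat \<Rightarrow> real" where
  "ss p \<delta> k = pz p (int k + \<delta>) / ytail p (int k - 1)"

definition theta :: "(nat \<Rightarrow> real) \<Rightarrow> int \<Rightarrow> nat \<Rightarrow> real" where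
  "theta p \<delta> k = (\<Sum>i\<le>k. ss p \<delta> i)"

definition Mx :: "(nat \<Rightarrow> 'a \<Rightarrow> nat) \<Rightarrow> nat \<Rightarrow> 'a \<Rightarrow> nat" where
  "Mx X n \<omega> = Max (insert 0 ((\<lambda>i. X i \<omega>) ` {1..n}))"

definition Ik :: "(nat \<Rightarrow> 'a \<Rightarrow> nat) \<Rightarrow> int \<Rightarrow> nat \<Rightarrow> 'a \<Rightarrow> real" where
  "Ik X \<delta> k \<omega> = (if int (X k \<omega>) > int (Mx X (k - 1) \<omega>) + \<delta> then 1 else 0)"

definition xi :: "(nat \<Rightarrow> real) \<Rightarrow> (nat \<Rightarrow> 'a \<Rightarrow> nat) \<Rightarrow> int \<Rightarrow> nat \<Rightarrow> 'a \<Rightarrow> real" where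
  "xi p X \<delta> k \<omega> = Ik X \<delta> k \<omega> - (theta p \<delta> (Mx X k \<omega>) - theta p \<delta> (Mx X (k - 1) \<omega>))"

definition natfilt :: "'a measure \<Rightarrow> (nat \<Rightarrow> 'a \<Rightarrow> nat) \<Rightarrow> nat \<Rightarrow> 'a measure" where
  "natfilt M X n = sigma (space M) (\<Union>i\<in>{1..n}. {X i -` A \<inter> space M | A. True})"

end

theory Submission
  imports Defs
begin

text \<open>Given \<open>M\<^sub>k\<^sub>-\<^sub>1 = m\<close>, the variable \<open>X\<^sub>k\<close> is independent of \<open>\<F>\<^sub>k\<^sub>-\<^sub>1\<close> with law \<open>p\<close>, so the
  conditional third moment of \<open>\<xi>\<^sub>k\<close> is the deterministic sum
  \<open>\<Sum>\<^sub>x p\<^sub>x \<bar>1{x > m + \<delta>} - D\<^sub>x\<bar>\<^sup>3\<close> with \<open>D\<^sub>x = \<theta>(max m x) - \<theta>(m)\<close>, evaluated at \<open>m = M\<^sub>k\<^sub>-\<^sub>1\<close>.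
  The indicator contributes at most \<open>y\<^sub>m\<^sub>+\<^sub>\<delta>\<close>. For the rest, write \<open>p\<^sub>x\<^sub>+\<^sub>1 = y\<^sub>x - y\<^sub>x\<^sub>+\<^sub>1\<close> and
  sum by parts three times: each time a power of \<open>D\<close> is traded for the increment \<open>s\<^sub>x\<^sub>+\<^sub>1\<close> of \<open>D\<close>,
  and the resulting weight \<open>Y\<^sub>x s\<^sub>x\<^sub>+\<^sub>1\<close> is dominated by the increments of a new nonnegative
  sequence, until a telescoping sum is left. Since \<open>y\<^sub>x s\<^sub>x\<^sub>+\<^sub>1 = p\<^sub>x\<^sub>+\<^sub>1\<^sub>+\<^sub>\<delta>\<close> is the increment of
  \<open>y\<^sub>x\<^sub>+\<^sub>\<delta>\<close>, everything hinges on comparing \<open>y\<^sub>x\<^sub>+\<^sub>\<delta>\<close> with \<open>y\<^sub>x\<close>. If \<open>y\<^sub>j\<^sub>+\<^sub>\<delta> \<le> K y\<^sub>j\<close> (trivial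
  for \<open>\<delta> > 0\<close>, and a consequence of \<open>limsup r\<^sub>k < 1\<close> for \<open>\<delta> < 0\<close>), the same sequence \<open>y\<^sub>x\<^sub>+\<^sub>\<delta>\<close>
  serves at every step. When \<open>r\<^sub>k \<rightarrow> 1\<close> regularly, the tails vary so slowly that \<open>y\<^sub>x\<^sub>+\<^sub>2\<^sub>\<delta>\<close> and
  \<open>y\<^sub>x\<^sub>+\<^sub>3\<^sub>\<delta>\<close> dominate eventually, and adding a multiple of \<open>y\<^sub>x\<close> absorbs the finitely many
  remaining indices.\<close>

lemma power_Suc_diff_le:
  fixes a b :: real
  assumes "0 \<le> b" "b \<le> a"
  shows "a ^ Suc n - b ^ Suc n \<le> Suc n * (a - b) * a ^ n"
proof -
  have "a ^ Suc n - b ^ Suc n = (a - b) * (\<Sum>i<Suc n. b ^ (Suc n - Suc i) * a ^ i)"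
    by (rule power_diff_sumr2)
  also have "(\<Sum>i<Suc n. b ^ (Suc n - Suc i) * a ^ i) \<le> (\<Sum>i<Suc n. a ^ n)"
  proof (rule sum_mono)
    fix i assume "i \<in> {..<Suc n}"
    then have "b ^ (n - i) * a ^ i \<le> a ^ (n - i) * a ^ i"
      using assms by (intro mult_right_mono power_mono) auto
    also have "\<dots> = a ^ n" using \<open>i \<in> {..<Suc n}\<close> by (simp add: power_add[symmetric])
    finally show "b ^ (Suc n - Suc i) * a ^ i \<le> a ^ n" by simp
  qed
  finally have "a ^ Suc n - b ^ Suc n \<le> (a - b) * (\<Sum>i<Suc n. a ^ n)"
    using assms by (simp add: mult_left_mono)
  then show ?thesis by (simp add: algebra_simps)
qed

lemma summation_by_parts_power_le:
  fixes Y s D :: "nat \<Rightarrow> real"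
  assumes Y: "\<And>x. 0 \<le> Y x" and s: "\<And>x. 0 \<le> s x" and D_start: "D m = 0"
    and D_Suc: "\<And>x. x \<ge> m \<Longrightarrow> D (Suc x) = D x + s (Suc x)"
  shows "(\<Sum>x\<in>{m..<N}. (Y x - Y (Suc x)) * D (Suc x) ^ Suc n)
          \<le> Suc n * (\<Sum>x\<in>{m..<N}. Y x * s (Suc x) * D (Suc x) ^ n)"
proof (cases "m \<le> N")
  case True
  have D_nonneg: "x \<ge> m \<Longrightarrow> D x \<ge> 0" for x
    by (induction x rule: dec_induct) (use D_start D_Suc s in auto)
  have parts: "(\<Sum>x\<in>{m..<N}. (Y x - Y (Suc x)) * D (Suc x) ^ Suc n) + Y N * D N ^ Suc n
        = (\<Sum>x\<in>{m..<N}. Y x * (D (Suc x) ^ Suc n - D x ^ Suc n))"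
    using True by (induction N rule: dec_induct) (simp_all add: D_start algebra_simps)
  have "(\<Sum>x\<in>{m..<N}. (Y x - Y (Suc x)) * D (Suc x) ^ Suc n)
      \<le> (\<Sum>x\<in>{m..<N}. Y x * (D (Suc x) ^ Suc n - D x ^ Suc n))"
  proof -
    have "0 \<le> Y N * D N ^ Suc n" using Y[of N] D_nonneg[OF True] by simp
    then show ?thesis using parts by linarith
  qed
  also have "\<dots> \<le> (\<Sum>x\<in>{m..<N}. Y x * (Suc n * s (Suc x) * D (Suc x) ^ n))"
  proof (rule sum_mono)
    fix x assume "x \<in> {m..<N}"
    then have "x \<ge> m" by simp
    have "D (Suc x) ^ Suc n - D x ^ Suc n \<le> Suc n * (D (Suc x) - D x) * D (Suc x) ^ n"
      by (rule power_Suc_diff_le) (use D_nonneg[OF \<open>x \<ge> m\<close>] D_Suc[OF \<open>x \<ge> m\<close>] s[of "Suc x"] in auto)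
    then show "Y x * (D (Suc x) ^ Suc n - D x ^ Suc n) \<le> Y x * (Suc n * s (Suc x) * D (Suc x) ^ n)"
      using D_Suc[OF \<open>x \<ge> m\<close>] by (intro mult_left_mono) (auto simp: Y)
  qed
  also have "\<dots> = Suc n * (\<Sum>x\<in>{m..<N}. Y x * s (Suc x) * D (Suc x) ^ n)"
    by (simp add: sum_distrib_left algebra_simps)
  finally show ?thesis .
qed simp

lemma suminf_ennreal_le_bound:
  fixes f :: "nat \<Rightarrow> real"
  assumes "\<And>x. 0 \<le> f x" "\<And>N. (\<Sum>x<N. f x) \<le> B"
  shows "(\<Sum>x. ennreal (f x)) \<le> ennreal B"
proof -
  have s: "summable f" by (rule summableI_nonneg_bounded[OF assms])
  have "(\<Sum>x. ennreal (f x)) = ennreal (suminf f)" by (rule suminf_ennreal2[OF assms(1) s])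
  also have "\<dots> \<le> ennreal B" by (rule ennreal_leI, rule suminf_le_const[OF s assms(2)])
  finally show ?thesis .
qed

lemma ratio_shift_tendsto_1:
  fixes Q :: "nat \<Rightarrow> real"
  assumes Q: "\<And>k. Q k > 0" and lim: "(\<lambda>k. Q (Suc k) / Q k) \<longlonglongrightarrow> 1"
  shows "(\<lambda>k. Q (k + L) / Q k) \<longlonglongrightarrow> 1"
proof (induction L)
  case 0
  show ?case using Q by (simp add: less_imp_neq[symmetric])
next
  case (Suc L)
  have "(\<lambda>k. Q (Suc (k + L)) / Q (k + L) * (Q (k + L) / Q k)) \<longlonglongrightarrow> 1 * 1"
    using LIMSEQ_ignore_initial_segment[OF lim, of L] Suc by (intro tendsto_mult) simp_all
  moreover have "(\<lambda>k. Q (Suc (k + L)) / Q (k + L) * (Q (k + L) / Q k)) = (\<lambda>k. Q (k + Suc L) / Q k)"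
    using Q by (simp add: less_imp_neq[symmetric])
  ultimately show ?case by simp
qed

lemma Mx_Suc: "Mx X (Suc n) \<omega> = max (Mx X n \<omega>) (X (Suc n) \<omega>)"
proof -
  have "{1..Suc n} = insert (Suc n) {1..n}" by auto
  then have "Mx X (Suc n) \<omega> = Max (insert (X (Suc n) \<omega>) (insert 0 ((\<lambda>i. X i \<omega>) ` {1..n})))"
    unfolding Mx_def by (simp add: insert_commute)
  also have "\<dots> = max (X (Suc n) \<omega>) (Mx X n \<omega>)"
    unfolding Mx_def by (rule Max_insert) auto
  finally show ?thesis by (simp add: max.commute)
qed

section \<open>Tails of a positive distribution on the naturals\<close>

locale pos_nat_distribution =
  fixes p :: "nat \<Rightarrow> real"
  assumes p_pos: "\<And>k. p k > 0" and p_sums: "p sums 1"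
begin

abbreviation tailn :: "nat \<Rightarrow> real" where
  "tailn n \<equiv> ytail p (int n)"

lemma pz_nonneg: "pz p j \<ge> 0"
  unfolding pz_def using p_pos by (simp add: less_imp_le)

lemma pz_int [simp]: "pz p (int k) = p k"
  by (simp add: pz_def)

lemma summable_shift: "summable (\<lambda>i. p (n + i))"
  using p_sums summable_iff_shift[of p n] by (simp add: sums_iff add.commute)

lemma ytail_pos: "ytail p j > 0"
proof -
  have "(\<Sum>i. p (nat j + 1 + i)) > 0"
    using summable_shift[of "nat j + 1"] p_pos by (intro suminf_pos) auto
  then show ?thesis by (simp add: ytail_def)
qed

lemma ytail_pred: "ytail p (j - 1) = pz p j + ytail p j"
proof (cases "j < 0")
  case True then show ?thesis by (simp add: ytail_def pz_def)
next
  case False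
  have head: "(\<Sum>i. p (nat j + i)) = p (nat j) + (\<Sum>i. p (nat j + 1 + i))"
    using suminf_split_head[OF summable_shift[of "nat j"]] by (simp add: add.commute add.left_commute)
  show ?thesis
  proof (cases "j = 0")
    case True
    then show ?thesis using head p_sums by (simp add: ytail_def pz_def sums_iff)
  next
    case False
    with \<open>\<not> j < 0\<close> have "nat (j - 1) + 1 = nat j" by simp
    then show ?thesis using head \<open>\<not> j < 0\<close> False by (simp add: ytail_def pz_def)
  qed
qed

lemma p_Suc_eq: "p (Suc n) = tailn n - tailn (Suc n)"
  using ytail_pred[of "int (Suc n)"] by (simp only: pz_int) simp

lemma ytail_antimono: "i \<le> j \<Longrightarrow> ytail p j \<le> ytail p i"
proof -
  assume "i \<le> j"
  then obtain n where n: "j = i + int n" using zle_iff_zadd by blast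
  have "ytail p (i + int n) \<le> ytail p i" for n
  proof (induction n)
    case (Suc n)
    have "ytail p (i + int (Suc n)) \<le> ytail p (i + int n)"
      using ytail_pred[of "i + int (Suc n)"] pz_nonneg[of "i + int (Suc n)"] by simp
    then show ?case using Suc by simp
  qed simp
  then show ?thesis using n by simp
qed

lemma sum_tail_le_ytail: "(\<Sum>x<N. if int x > j then p x else 0) \<le> ytail p j"
proof -
  let ?f = "\<lambda>x. if int x > j then p x else 0"
  have summable: "summable ?f"
    by (rule summable_comparison_test'[of p 0]) (use p_sums p_pos in \<open>auto simp: sums_iff less_imp_le\<close>)
  have "(\<Sum>x<N. ?f x) \<le> suminf ?f"
    by (rule sum_le_suminf[OF summable]) (use p_pos in \<open>auto simp: less_imp_le\<close>)
  also have "suminf ?f = ytail p j"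
  proof (cases "j < 0")
    case True
    then have "?f = p" by (auto simp: fun_eq_iff)
    then show ?thesis using True p_sums by (simp add: ytail_def sums_iff)
  next
    case False
    have "suminf ?f = (\<Sum>n. ?f (n + (nat j + 1))) + sum ?f {..<nat j + 1}"
      by (rule suminf_split_initial_segment[OF summable])
    also have "sum ?f {..<nat j + 1} = 0" using False by (intro sum.neutral) auto
    also have "(\<lambda>n. ?f (n + (nat j + 1))) = (\<lambda>i. p (nat j + 1 + i))"
      using False by (auto simp: fun_eq_iff add.commute)
    finally show ?thesis using False by (simp add: ytail_def)
  qed
  finally show ?thesis .
qed

lemma ss_nonneg: "ss p \<delta> x \<ge> 0"
  unfolding ss_def using pz_nonneg ytail_pos by (simp add: less_imp_le)

lemma ss_Suc_eq: "ss p \<delta> (Suc x) = pz p (int x + 1 + \<delta>) / tailn x"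
  by (simp add: ss_def add.commute add.left_commute)

lemma tailn_eq_rr: "tailn k = (1 - rr p k) * ytail p (int k - 1)"
  using ytail_pred[of "int k"] ytail_pos[of "int k - 1"] by (simp add: rr_def field_simps)

lemma rr_lt_1: "rr p k < 1"
  using tailn_eq_rr[of k] ytail_pos[of "int k"] ytail_pos[of "int k - 1"]
  by (simp add: zero_less_mult_iff)

lemma rr_nonneg: "rr p k \<ge> 0"
  unfolding rr_def using p_pos ytail_pos by (simp add: less_imp_le)

subsection \<open>The conditional third moment\<close>

definition dtheta :: "int \<Rightarrow> nat \<Rightarrow> nat \<Rightarrow> real" where
  "dtheta \<delta> m x = theta p \<delta> (max m x) - theta p \<delta> m"

text \<open>The value of \<open>\<xi>\<^sub>k\<close> on the event \<open>M\<^sub>k\<^sub>-\<^sub>1 = m, X\<^sub>k = x\<close>.\<close>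
definition xi_val :: "int \<Rightarrow> nat \<Rightarrow> nat \<Rightarrow> real" where
  "xi_val \<delta> m x = (if int x > int m + \<delta> then 1 else 0) - dtheta \<delta> m x"

definition cube_moment :: "int \<Rightarrow> nat \<Rightarrow> ennreal" where
  "cube_moment \<delta> m = (\<Sum>x. ennreal (p x * \<bar>xi_val \<delta> m x\<bar> ^ 3))"

lemma xi_eq_xi_val: "k \<ge> 1 \<Longrightarrow> xi p X \<delta> k \<omega> = xi_val \<delta> (Mx X (k - 1) \<omega>) (X k \<omega>)"
  using Mx_Suc[of X "k - 1" \<omega>]
  by (simp add: xi_def xi_val_def dtheta_def Ik_def max.commute)

lemma nn_integral_xi_val_cube:
  "(\<integral>\<^sup>+x. ennreal (p x) * ennreal (\<bar>xi_val \<delta> m x\<bar> ^ 3) \<partial>count_space UNIV) = cube_moment \<delta> m"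
  unfolding cube_moment_def nn_integral_count_space_nat
  using p_pos by (intro suminf_cong) (simp add: ennreal_mult less_imp_le)

lemma dtheta_le: "x \<le> m \<Longrightarrow> dtheta \<delta> m x = 0"
  by (simp add: dtheta_def)

lemma dtheta_Suc: "x \<ge> m \<Longrightarrow> dtheta \<delta> m (Suc x) = dtheta \<delta> m x + ss p \<delta> (Suc x)"
  by (simp add: dtheta_def theta_def max_def)

lemma dtheta_nonneg: "dtheta \<delta> m x \<ge> 0"
proof (cases "x \<ge> m")
  case True then show ?thesis
    by (induction x rule: dec_induct) (auto simp: dtheta_le dtheta_Suc ss_nonneg)
qed (simp add: dtheta_le)

lemma sum_dtheta_power_step:
  fixes Z Z' :: "nat \<Rightarrow> real" and c :: real
  assumes Z: "\<And>x. 0 \<le> Z x" and c: "c \<ge> 0"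
    and major: "\<And>x. Z x * ss p \<delta> (Suc x) \<le> c * (Z' x - Z' (Suc x))"
  shows "(\<Sum>x\<in>{m..<N}. (Z x - Z (Suc x)) * dtheta \<delta> m (Suc x) ^ Suc n)
      \<le> Suc n * c * (\<Sum>x\<in>{m..<N}. (Z' x - Z' (Suc x)) * dtheta \<delta> m (Suc x) ^ n)"
proof -
  have parts: "(\<Sum>x\<in>{m..<N}. (Z x - Z (Suc x)) * dtheta \<delta> m (Suc x) ^ Suc n)
      \<le> Suc n * (\<Sum>x\<in>{m..<N}. Z x * ss p \<delta> (Suc x) * dtheta \<delta> m (Suc x) ^ n)"
    by (rule summation_by_parts_power_le) (auto simp: Z ss_nonneg dtheta_le dtheta_Suc)
  have majorize: "(\<Sum>x\<in>{m..<N}. Z x * ss p \<delta> (Suc x) * dtheta \<delta> m (Suc x) ^ n)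
      \<le> c * (\<Sum>x\<in>{m..<N}. (Z' x - Z' (Suc x)) * dtheta \<delta> m (Suc x) ^ n)"
    unfolding sum_distrib_left using major dtheta_nonneg
    by (intro sum_mono) (metis mult.assoc mult_right_mono zero_le_power)
  have "real (Suc n) * (\<Sum>x\<in>{m..<N}. Z x * ss p \<delta> (Suc x) * dtheta \<delta> m (Suc x) ^ n)
      \<le> real (Suc n) * (c * (\<Sum>x\<in>{m..<N}. (Z' x - Z' (Suc x)) * dtheta \<delta> m (Suc x) ^ n))"
    by (rule mult_left_mono[OF majorize]) simp
  from order_trans[OF parts this] show ?thesis by (simp only: mult.assoc)
qed

lemma sum_p_dtheta_cube_le:
  assumes Y1: "\<And>x. 0 \<le> Y1 x" and Y2: "\<And>x. 0 \<le> Y2 x"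
    and c1: "c1 \<ge> 0" and c2: "c2 \<ge> 0"
    and major1: "\<And>x. ytail p (int x + \<delta>) * ss p \<delta> (Suc x) \<le> c1 * (Y1 x - Y1 (Suc x))"
    and major2: "\<And>x. Y1 x * ss p \<delta> (Suc x) \<le> c2 * (Y2 x - Y2 (Suc x))"
  shows "(\<Sum>x\<in>{m..<N}. p (Suc x) * dtheta \<delta> m (Suc x) ^ 3) \<le> 6 * c1 * c2 * Y2 m"
proof -
  let ?D = "dtheta \<delta> m" and ?Y0 = "\<lambda>x. ytail p (int x + \<delta>)"
  have major0: "tailn x * ss p \<delta> (Suc x) \<le> 1 * (?Y0 x - ?Y0 (Suc x))" for x
    using ytail_pred[of "int x + 1 + \<delta>"] ytail_pos[of "int x"] by (simp add: ss_Suc_eq ac_simps)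
  let ?T = "\<lambda>Z n. \<Sum>x\<in>{m..<N}. (Z x - Z (Suc x)) * ?D (Suc x) ^ n"
  have step3: "?T tailn 3 \<le> 3 * ?T ?Y0 2"
    using sum_dtheta_power_step[OF _ _ major0, where n=2] ytail_pos by (simp add: less_imp_le)
  have step2: "?T ?Y0 2 \<le> 2 * c1 * ?T Y1 1"
    using sum_dtheta_power_step[OF _ c1 major1, where n=1] ytail_pos by (simp add: less_imp_le power2_eq_square)
  have step1: "?T Y1 1 \<le> c2 * ?T Y2 0"
    using sum_dtheta_power_step[OF Y1 c2 major2, where n=0] by simp
  have step0: "?T Y2 0 \<le> Y2 m"
    using sum_Suc_diff'[of m N "\<lambda>x. - Y2 x"] Y2[of N] Y2[of m] by (cases "m \<le> N") auto
  have "(\<Sum>x\<in>{m..<N}. p (Suc x) * ?D (Suc x) ^ 3) = ?T tailn 3"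
    by (simp add: p_Suc_eq)
  also have "\<dots> \<le> 3 * (2 * c1 * (c2 * Y2 m))"
    using step3 mult_left_mono[OF step2, of 3] mult_left_mono[OF step1, of "6 * c1"]
      mult_left_mono[OF step0, of "6 * c1 * c2"] c1 c2
    by (simp add: algebra_simps)
  finally show ?thesis by simp
qed

lemma abs_xi_val_cube_le:
  "\<bar>xi_val \<delta> m x\<bar> ^ 3 \<le> (if int x > int m + \<delta> then 1 else 0) + dtheta \<delta> m x ^ 3"
proof -
  have D: "dtheta \<delta> m x \<ge> 0" by (rule dtheta_nonneg)
  have "\<bar>1 - dtheta \<delta> m x\<bar> ^ 3 \<le> max 1 (dtheta \<delta> m x) ^ 3"
    using D by (intro power_mono) auto
  also have "\<dots> \<le> 1 + dtheta \<delta> m x ^ 3"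
    using D by (cases "dtheta \<delta> m x \<le> 1") (auto simp: max_def)
  finally show ?thesis
    using D by (simp add: xi_val_def)
qed

lemma cube_moment_le:
  assumes Y1: "\<And>x. 0 \<le> Y1 x" and Y2: "\<And>x. 0 \<le> Y2 x"
    and c1: "c1 \<ge> 0" and c2: "c2 \<ge> 0"
    and major1: "\<And>x. ytail p (int x + \<delta>) * ss p \<delta> (Suc x) \<le> c1 * (Y1 x - Y1 (Suc x))"
    and major2: "\<And>x. Y1 x * ss p \<delta> (Suc x) \<le> c2 * (Y2 x - Y2 (Suc x))"
  shows "cube_moment \<delta> m \<le> ennreal (ytail p (int m + \<delta>) + 6 * c1 * c2 * Y2 m)"
  unfolding cube_moment_def
proof (rule suminf_ennreal_le_bound)
  fix x show "0 \<le> p x * \<bar>xi_val \<delta> m x\<bar> ^ 3" using p_pos[of x] by simp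
next
  fix N
  let ?f = "\<lambda>x. p x * dtheta \<delta> m x ^ 3"
  have "(\<Sum>x<N. p x * \<bar>xi_val \<delta> m x\<bar> ^ 3)
      \<le> (\<Sum>x<N. (if int x > int m + \<delta> then p x else 0) + ?f x)"
  proof (rule sum_mono)
    fix x
    show "p x * \<bar>xi_val \<delta> m x\<bar> ^ 3 \<le> (if int x > int m + \<delta> then p x else 0) + ?f x"
      using mult_left_mono[OF abs_xi_val_cube_le[of \<delta> m x] less_imp_le[OF p_pos[of x]]]
      by (simp add: distrib_left split: if_splits)
  qed
  also have "\<dots> = (\<Sum>x<N. if int x > int m + \<delta> then p x else 0) + (\<Sum>x<N. ?f x)"
    by (rule sum.distrib)
  also have "(\<Sum>x<N. ?f x) \<le> (\<Sum>x\<in>{m..<N}. p (Suc x) * dtheta \<delta> m (Suc x) ^ 3)"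
  proof -
    have "(\<Sum>x<N. ?f x) \<le> (\<Sum>x<Suc N. ?f x)"
      using p_pos[of N] dtheta_nonneg[of \<delta> m N] by simp
    also have "\<dots> = (\<Sum>x<N. ?f (Suc x))"
      by (subst sum.lessThan_Suc_shift) (simp add: dtheta_le)
    also have "\<dots> = (\<Sum>x\<in>{m..<N}. ?f (Suc x))"
      by (rule sum.mono_neutral_right) (auto simp: dtheta_le)
    finally show ?thesis .
  qed
  also have "\<dots> \<le> 6 * c1 * c2 * Y2 m"
    by (rule sum_p_dtheta_cube_le[OF Y1 Y2 c1 c2 major1 major2])
  finally show "(\<Sum>x<N. p x * \<bar>xi_val \<delta> m x\<bar> ^ 3) \<le> ytail p (int m + \<delta>) + 6 * c1 * c2 * Y2 m"
    using sum_tail_le_ytail[of "int m + \<delta>" N] by linarith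
qed

subsection \<open>Tails comparable under shifts\<close>

lemma cube_moment_le_shift:
  assumes K: "K \<ge> 0" and shift: "\<And>j. ytail p (j + \<delta>) \<le> K * ytail p j"
  shows "cube_moment \<delta> m \<le> ennreal ((1 + 6 * K\<^sup>2) * ytail p (int m + \<delta>))"
proof -
  let ?Y = "\<lambda>x::nat. ytail p (int x + \<delta>)"
  have major: "?Y x * ss p \<delta> (Suc x) \<le> K * (?Y x - ?Y (Suc x))" for x
  proof -
    have "?Y x * ss p \<delta> (Suc x) = ?Y x / tailn x * pz p (int x + 1 + \<delta>)"
      by (simp add: ss_Suc_eq)
    also have "\<dots> \<le> K * pz p (int x + 1 + \<delta>)"
      using shift[of "int x"] ytail_pos[of "int x"]
      by (intro mult_right_mono pz_nonneg) (simp add: divide_le_eq)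
    also have "pz p (int x + 1 + \<delta>) = ?Y x - ?Y (Suc x)"
      using ytail_pred[of "int x + 1 + \<delta>"] by (simp add: ac_simps)
    finally show ?thesis .
  qed
  have "cube_moment \<delta> m \<le> ennreal (?Y m + 6 * K * K * ?Y m)"
    by (rule cube_moment_le[OF _ _ K K major major]) (simp_all add: less_imp_le ytail_pos)
  then show ?thesis by (simp add: algebra_simps power2_eq_square)
qed

lemma cube_moment_le_pos_shift:
  "\<delta> > 0 \<Longrightarrow> cube_moment \<delta> m \<le> ennreal (7 * ytail p (int m + \<delta>))"
  using cube_moment_le_shift[of 1 \<delta> m] ytail_antimono by simp

lemma ytail_pred_le_const:
  assumes "limsup (\<lambda>k. ereal (rr p k)) < 1"
  shows "\<exists>K\<ge>1. \<forall>j. ytail p (j - 1) \<le> K * ytail p j"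
proof -
  obtain z where z: "limsup (\<lambda>k. ereal (rr p k)) < ereal z" "z < 1"
    using ereal_dense2[OF assms] by auto
  obtain N where N: "\<And>k. k \<ge> N \<Longrightarrow> rr p k < z"
    using Limsup_lessD[OF z(1)] by (auto simp: eventually_sequentially)
  define \<rho> where "\<rho> = Max (insert z (rr p ` {..<N}))"
  have \<rho>_lt_1: "\<rho> < 1" unfolding \<rho>_def using z(2) rr_lt_1 by (auto simp: Max_less_iff)
  have rr_le: "rr p k \<le> \<rho>" for k
  proof (cases "k < N")
    case False
    then have "rr p k < z" using N by simp
    moreover have "z \<le> \<rho>" unfolding \<rho>_def by (intro Max_ge) auto
    ultimately show ?thesis by simp
  qed (unfold \<rho>_def, intro Max_ge, auto)
  have "ytail p (j - 1) \<le> 1 / (1 - \<rho>) * ytail p j" for j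
  proof (cases "j < 0")
    case True then show ?thesis using rr_le[of 0] rr_nonneg[of 0] \<rho>_lt_1 by (simp add: ytail_def)
  next
    case False
    then obtain k where k: "j = int k" by (metis nonneg_int_cases not_less)
    have "(1 - \<rho>) * ytail p (int k - 1) \<le> tailn k"
      using tailn_eq_rr[of k] rr_le[of k] ytail_pos[of "int k - 1"] by (simp add: mult_right_mono)
    then show ?thesis using k \<rho>_lt_1 by (simp add: field_simps)
  qed
  moreover have "1 / (1 - \<rho>) \<ge> 1" using rr_le[of 0] rr_nonneg[of 0] \<rho>_lt_1 by simp
  ultimately show ?thesis by blast
qed

lemma ytail_minus_le_power:
  assumes K: "K \<ge> 0" and pred: "\<And>j. ytail p (j - 1) \<le> K * ytail p j"
  shows "ytail p (j - int L) \<le> K ^ L * ytail p j"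
proof (induction L)
  case (Suc L)
  have "ytail p (j - int (Suc L)) \<le> K * ytail p (j - int L)"
    using pred[of "j - int L"] by (simp add: algebra_simps)
  also have "\<dots> \<le> K * (K ^ L * ytail p j)" using Suc K by (intro mult_left_mono)
  finally show ?case by simp
qed simp

lemma cube_moment_le_of_limsup_rr:
  assumes "\<delta> < 0" and "limsup (\<lambda>k. ereal (rr p k)) < 1"
  shows "\<exists>C>0. \<forall>m. cube_moment \<delta> m \<le> ennreal (C * tailn m)"
proof -
  obtain K where K: "K \<ge> 1" and pred: "\<And>j. ytail p (j - 1) \<le> K * ytail p j"
    using ytail_pred_le_const[OF assms(2)] by blast
  define L where "L = K ^ nat (- \<delta>)"
  have L: "L \<ge> 1" using K by (simp add: L_def)
  have shift: "ytail p (j + \<delta>) \<le> L * ytail p j" for j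
    using ytail_minus_le_power[OF _ pred, of j "nat (- \<delta>)"] K assms(1) by (simp add: L_def)
  have "cube_moment \<delta> m \<le> ennreal ((1 + 6 * L\<^sup>2) * L * tailn m)" for m
  proof -
    have "cube_moment \<delta> m \<le> ennreal ((1 + 6 * L\<^sup>2) * ytail p (int m + \<delta>))"
      using cube_moment_le_shift[OF _ shift] L by simp
    also have "\<dots> \<le> ennreal ((1 + 6 * L\<^sup>2) * L * tailn m)"
      using mult_left_mono[OF shift[of "int m"], of "1 + 6 * L\<^sup>2"]
      by (intro ennreal_leI) (simp add: mult.assoc)
    finally show ?thesis .
  qed
  moreover have "(1 + 6 * L\<^sup>2) * L > 0" using L by (simp add: add_pos_nonneg)
  ultimately show ?thesis by blast
qed

subsection \<open>Regularly varying hazard rates\<close>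

definition tail_majorant :: "int \<Rightarrow> real \<Rightarrow> nat \<Rightarrow> real" where
  "tail_majorant e A x = ytail p (int x + e) + A * tailn x"

lemma tail_majorant_nonneg: "A \<ge> 0 \<Longrightarrow> tail_majorant e A x \<ge> 0"
  unfolding tail_majorant_def using ytail_pos[of "int x + e"] ytail_pos[of "int x"] by simp

lemma tail_majorant_diff:
  "tail_majorant e A x - tail_majorant e A (Suc x) = pz p (int x + 1 + e) + A * p (Suc x)"
proof -
  have "ytail p (int x + e) = pz p (int x + 1 + e) + ytail p (int (Suc x) + e)"
    using ytail_pred[of "int x + 1 + e"] by (simp add: ac_simps)
  moreover have "tailn x = p (Suc x) + tailn (Suc x)"
    using p_Suc_eq[of x] by simp
  ultimately show ?thesis
    unfolding tail_majorant_def by (simp only:) (simp add: algebra_simps)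
qed

text \<open>A bound by the increments of \<open>y\<^sub>x\<^sub>+\<^sub>e\<close> valid only from \<open>N\<close> on is extended to all \<open>x\<close>
  by adding a multiple of \<open>y\<^sub>x\<close>, whose increments \<open>p\<^sub>x\<^sub>+\<^sub>1\<close> are positive.\<close>
lemma eventually_le_tail_majorant:
  fixes f :: "nat \<Rightarrow> real"
  assumes c: "c > 0" and ev: "\<And>x. x \<ge> N \<Longrightarrow> f x \<le> c * pz p (int x + 1 + e)"
  shows "\<exists>A\<ge>0. \<forall>x. f x \<le> c * (tail_majorant e A x - tail_majorant e A (Suc x))"
proof -
  define A where "A = (\<Sum>x<N. max 0 (f x) / (c * p (Suc x)))"
  have A: "A \<ge> 0" unfolding A_def using c p_pos by (intro sum_nonneg) (simp add: less_imp_le)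
  have "f x \<le> c * (pz p (int x + 1 + e) + A * p (Suc x))" for x
  proof (cases "x < N")
    case True
    have "max 0 (f x) / (c * p (Suc x)) \<le> A"
      unfolding A_def using True c p_pos by (intro member_le_sum) (auto simp: less_imp_le)
    then have "f x \<le> c * (A * p (Suc x))"
      using c p_pos[of "Suc x"] by (simp add: field_simps)
    moreover have "0 \<le> c * pz p (int x + 1 + e)"
      using c pz_nonneg[of "int x + 1 + e"] by simp
    ultimately show ?thesis by (simp add: distrib_left)
  next
    case False
    then have "f x \<le> c * pz p (int x + 1 + e)" using ev by simp
    moreover have "0 \<le> c * (A * p (Suc x))" using c A p_pos[of "Suc x"] by simp
    ultimately show ?thesis by (simp add: distrib_left)
  qed
  then show ?thesis using A by (auto simp: tail_majorant_diff)
qed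

lemma tailn_Suc_eq: "tailn (Suc j) = (1 - rr p (Suc j)) * tailn j"
  using tailn_eq_rr[of "Suc j"] by simp

lemma tailn_cross_ratio_bound:
  assumes "(\<lambda>k. (1 - rr p (Suc k)) / (1 - rr p k)) \<longlonglongrightarrow> 1"
  shows "\<exists>N. \<forall>n\<ge>N. \<forall>L. tailn (n + L) * tailn (n + d) \<le> 2 ^ L * tailn n * tailn (n + d + L)"
proof -
  define Q where "Q k = 1 - rr p k" for k
  have Q_pos: "Q k > 0" for k using rr_lt_1[of k] by (simp add: Q_def)
  have "(\<lambda>k. Q (k + d) / Q k) \<longlonglongrightarrow> 1"
    by (rule ratio_shift_tendsto_1[OF Q_pos]) (use assms in \<open>simp add: Q_def\<close>)
  then have "eventually (\<lambda>k. Q (k + d) / Q k > 1/2) sequentially"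
    by (rule order_tendstoD) simp
  then obtain N where N: "\<And>k. k \<ge> N \<Longrightarrow> Q (k + d) / Q k > 1/2"
    by (auto simp: eventually_sequentially)
  have one_step: "tailn (Suc j) * tailn (j + d) \<le> 2 * tailn j * tailn (Suc (j + d))" if "j \<ge> N" for j
  proof -
    have "Q (Suc j) < 2 * Q (Suc (j + d))"
      using N[of "Suc j"] that Q_pos[of "Suc j"] by (simp add: field_simps)
    then have "Q (Suc j) * (tailn j * tailn (j + d)) \<le> 2 * Q (Suc (j + d)) * (tailn j * tailn (j + d))"
      using ytail_pos by (intro mult_right_mono) (auto simp: less_imp_le)
    then show ?thesis
      unfolding tailn_Suc_eq[of j] tailn_Suc_eq[of "j + d"] Q_def by (simp add: algebra_simps)
  qed
  have "tailn (j + L) * tailn (j + d) \<le> 2 ^ L * tailn j * tailn (j + d + L)" if "j \<ge> N" for j L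
  proof (induction L)
    case (Suc L)
    have step: "tailn (Suc (j + L)) * tailn (j + L + d) \<le> 2 * tailn (j + L) * tailn (Suc (j + L + d))"
      using one_step[of "j + L"] that by simp
    have "tailn (j + Suc L) * tailn (j + d) * (tailn (j + L) * tailn (j + L + d))
        = (tailn (Suc (j + L)) * tailn (j + L + d)) * (tailn (j + L) * tailn (j + d))"
      by (simp add: algebra_simps)
    also have "\<dots> \<le> (2 * tailn (j + L) * tailn (Suc (j + L + d))) * (2 ^ L * tailn j * tailn (j + d + L))"
      by (rule mult_mono[OF step Suc]) (use ytail_pos in \<open>auto intro!: mult_nonneg_nonneg simp: less_imp_le\<close>)
    also have "\<dots> = (2 ^ Suc L * tailn j * tailn (j + d + Suc L)) * (tailn (j + L) * tailn (j + L + d))"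
      by (simp add: algebra_simps)
    finally show ?case using ytail_pos by (simp add: mult_le_cancel_right)
  qed simp
  then show ?thesis by blast
qed

lemma tailn_le_twice_p:
  assumes "rr p \<longlonglongrightarrow> 1"
  shows "\<exists>N. \<forall>n\<ge>N. tailn n \<le> 2 * p (Suc n)"
proof -
  have "eventually (\<lambda>k. rr p k > 1/2) sequentially"
    by (rule order_tendstoD[OF assms]) simp
  then obtain N where N: "\<And>k. k \<ge> N \<Longrightarrow> rr p k > 1/2"
    by (auto simp: eventually_sequentially)
  have "tailn n \<le> 2 * p (Suc n)" if "n \<ge> N" for n
  proof -
    have "(1 - rr p (Suc n)) * tailn n \<le> 1/2 * tailn n"
      using N[of "Suc n"] that ytail_pos[of "int n"] by (intro mult_right_mono) auto
    then show ?thesis using p_Suc_eq[of n] tailn_Suc_eq[of n] by simp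
  qed
  then show ?thesis by blast
qed

lemma tailn_estimates_regular:
  assumes "rr p \<longlonglongrightarrow> 1" and "(\<lambda>k. (1 - rr p (Suc k)) / (1 - rr p k)) \<longlonglongrightarrow> 1"
  shows "\<exists>N. \<forall>n\<ge>N. tailn (n + d) * p (n + d + 1) \<le> 2 ^ (d + 1) * p (n + 1) * tailn (n + 2 * d)
                 \<and> tailn (n + d) * p (n + 2 * d + 1) \<le> 2 ^ (2 * d + 1) * p (n + 1) * tailn (n + 3 * d)
                 \<and> p (n + 2 * d + 1) \<le> 2 * p (n + 1)"
proof -
  obtain N1 where cross: "\<And>n L. n \<ge> N1 \<Longrightarrow> tailn (n + L) * tailn (n + d) \<le> 2 ^ L * tailn n * tailn (n + d + L)"
    using tailn_cross_ratio_bound[OF assms(2), of d] by blast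
  obtain N2 where twice: "\<And>n. n \<ge> N2 \<Longrightarrow> tailn n \<le> 2 * p (Suc n)"
    using tailn_le_twice_p[OF assms(1)] by blast
  have p_le: "p (Suc j) \<le> tailn j" for j using p_Suc_eq[of j] ytail_pos[of "int (Suc j)"] by simp
  have gen: "tailn (n + d) * p (n + L + 1) \<le> 2 ^ (L + 1) * p (n + 1) * tailn (n + d + L)"
    if "n \<ge> max N1 N2" for n L
  proof -
    have "tailn (n + d) * p (n + L + 1) \<le> tailn (n + L) * tailn (n + d)"
      using p_le[of "n + L"] ytail_pos by (simp add: mult_left_mono less_imp_le mult.commute)
    also have "\<dots> \<le> 2 ^ L * tailn n * tailn (n + d + L)" using cross that by simp
    also have "\<dots> \<le> 2 ^ L * (2 * p (n + 1)) * tailn (n + d + L)"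
      using twice[of n] that ytail_pos by (intro mult_right_mono mult_left_mono) (auto simp: less_imp_le)
    finally show ?thesis by (simp add: algebra_simps)
  qed
  have "p (n + 2 * d + 1) \<le> 2 * p (n + 1)" if "n \<ge> max N1 N2" for n
    using p_le[of "n + 2 * d"] ytail_antimono[of "int n" "int (n + 2 * d)"] twice[of n] that by simp
  moreover have "n + d + d = n + 2 * d" "n + d + 2 * d = n + 3 * d" for n by simp_all
  ultimately show ?thesis
    using gen[of _ d] gen[of _ "2 * d"] by (intro exI[of _ "max N1 N2"]) (auto simp: add.commute)
qed

context
  fixes \<delta> :: int and d :: nat
  assumes \<delta>_eq: "\<delta> = - int d"
    and rr_lim: "rr p \<longlonglongrightarrow> 1" and rr_ratio: "(\<lambda>k. (1 - rr p (Suc k)) / (1 - rr p k)) \<longlonglongrightarrow> 1"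
begin

lemma first_majorant_regular:
  "\<exists>A\<ge>0. \<forall>x. ytail p (int x + \<delta>) * ss p \<delta> (Suc x)
            \<le> 2 ^ (d + 1) * (tail_majorant (2 * \<delta>) A x - tail_majorant (2 * \<delta>) A (Suc x))"
proof -
  obtain N where est: "\<And>n. n \<ge> N \<Longrightarrow> tailn (n + d) * p (n + d + 1) \<le> 2 ^ (d + 1) * p (n + 1) * tailn (n + 2 * d)"
    using tailn_estimates_regular[OF rr_lim rr_ratio, of d] by blast
  show ?thesis
  proof (rule eventually_le_tail_majorant)
    fix x assume x: "x \<ge> N + 2 * d"
    define n where "n = x - 2 * d"
    have n: "x = n + 2 * d" "n \<ge> N" using x by (simp_all add: n_def)
    have shifts: "int x + \<delta> = int (n + d)" "int x + 1 + \<delta> = int (n + d + 1)"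
      "int x + 1 + 2 * \<delta> = int (n + 1)"
      using n(1) \<delta>_eq by simp_all
    have "ytail p (int x + \<delta>) * ss p \<delta> (Suc x) = tailn (n + d) * p (n + d + 1) / tailn (n + 2 * d)"
      unfolding ss_Suc_eq shifts pz_int by (simp add: n(1))
    also have "\<dots> \<le> 2 ^ (d + 1) * p (n + 1)"
      using est[OF n(2)] ytail_pos[of "int (n + 2 * d)"] by (simp add: divide_le_eq)
    finally show "ytail p (int x + \<delta>) * ss p \<delta> (Suc x) \<le> 2 ^ (d + 1) * pz p (int x + 1 + 2 * \<delta>)"
      unfolding shifts pz_int .
  qed simp
qed

lemma second_majorant_regular:
  assumes A: "A \<ge> 0"
  shows "\<exists>A'\<ge>0. \<forall>x. tail_majorant (2 * \<delta>) A x * ss p \<delta> (Suc x)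
            \<le> (2 ^ (2 * d + 1) + 2 * A) * (tail_majorant (3 * \<delta>) A' x - tail_majorant (3 * \<delta>) A' (Suc x))"
proof -
  obtain N where est: "\<And>n. n \<ge> N \<Longrightarrow>
      tailn (n + d) * p (n + 2 * d + 1) \<le> 2 ^ (2 * d + 1) * p (n + 1) * tailn (n + 3 * d)
      \<and> p (n + 2 * d + 1) \<le> 2 * p (n + 1)"
    using tailn_estimates_regular[OF rr_lim rr_ratio, of d] by blast
  show ?thesis
  proof (rule eventually_le_tail_majorant)
    fix x assume x: "x \<ge> N + 3 * d"
    define n where "n = x - 3 * d"
    have n: "x = n + 3 * d" "n \<ge> N" using x by (simp_all add: n_def)
    have shifts: "int x + 2 * \<delta> = int (n + d)" "int x + 1 + \<delta> = int (n + 2 * d + 1)"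
      "int x + 1 + 3 * \<delta> = int (n + 1)"
      using n(1) \<delta>_eq by simp_all
    have pos: "tailn (n + 3 * d) > 0" by (rule ytail_pos)
    have "tail_majorant (2 * \<delta>) A x * ss p \<delta> (Suc x)
        = tailn (n + d) * p (n + 2 * d + 1) / tailn (n + 3 * d) + A * p (n + 2 * d + 1)"
      unfolding tail_majorant_def ss_Suc_eq shifts pz_int using pos by (simp add: n(1) field_simps)
    also have "\<dots> \<le> 2 ^ (2 * d + 1) * p (n + 1) + A * (2 * p (n + 1))"
      using est[OF n(2)] pos A by (intro add_mono mult_left_mono) (simp_all add: divide_le_eq)
    also have "\<dots> = (2 ^ (2 * d + 1) + 2 * A) * p (n + 1)"
      by (simp add: algebra_simps)
    finally show "tail_majorant (2 * \<delta>) A x * ss p \<delta> (Suc x)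
        \<le> (2 ^ (2 * d + 1) + 2 * A) * pz p (int x + 1 + 3 * \<delta>)"
      unfolding shifts pz_int .
  qed (use A in \<open>simp add: add_pos_nonneg\<close>)
qed

end

lemma cube_moment_le_of_rr_regular:
  assumes "\<delta> < 0" and rr_lim: "rr p \<longlonglongrightarrow> 1"
    and rr_ratio: "(\<lambda>k. (1 - rr p (Suc k)) / (1 - rr p k)) \<longlonglongrightarrow> 1"
  shows "\<exists>C>0. \<forall>m. cube_moment \<delta> m \<le> ennreal (C * ytail p (int m + 3 * \<delta>))"
proof -
  define d where "d = nat (- \<delta>)"
  have \<delta>_eq: "\<delta> = - int d" using assms(1) by (simp add: d_def)
  define c1 :: real where "c1 = 2 ^ (d + 1)"
  obtain A where A: "A \<ge> 0" and major1: "\<And>x. ytail p (int x + \<delta>) * ss p \<delta> (Suc x)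
      \<le> c1 * (tail_majorant (2 * \<delta>) A x - tail_majorant (2 * \<delta>) A (Suc x))"
    using first_majorant_regular[OF \<delta>_eq rr_lim rr_ratio] unfolding c1_def by blast
  define c2 :: real where "c2 = 2 ^ (2 * d + 1) + 2 * A"
  obtain A' where A': "A' \<ge> 0" and major2: "\<And>x. tail_majorant (2 * \<delta>) A x * ss p \<delta> (Suc x)
      \<le> c2 * (tail_majorant (3 * \<delta>) A' x - tail_majorant (3 * \<delta>) A' (Suc x))"
    using second_majorant_regular[OF \<delta>_eq rr_lim rr_ratio A] unfolding c2_def by blast
  have c: "c1 > 0" "c2 > 0" using A by (simp_all add: c1_def c2_def add_pos_nonneg)
  define C where "C = 1 + 6 * c1 * c2 * (1 + A')"
  have "cube_moment \<delta> m \<le> ennreal (C * ytail p (int m + 3 * \<delta>))" for m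
  proof -
    have "cube_moment \<delta> m \<le> ennreal (ytail p (int m + \<delta>) + 6 * c1 * c2 * tail_majorant (3 * \<delta>) A' m)"
      using c A A' tail_majorant_nonneg
      by (intro cube_moment_le[OF _ _ _ _ major1 major2]) simp_all
    also have "\<dots> \<le> ennreal (C * ytail p (int m + 3 * \<delta>))"
    proof (rule ennreal_leI)
      have mono: "ytail p (int m + \<delta>) \<le> ytail p (int m + 3 * \<delta>)" "tailn m \<le> ytail p (int m + 3 * \<delta>)"
        using assms(1) by (simp_all add: ytail_antimono)
      then have "tail_majorant (3 * \<delta>) A' m \<le> (1 + A') * ytail p (int m + 3 * \<delta>)"
        using A' unfolding tail_majorant_def by (simp add: algebra_simps mult_left_mono)
      then have "6 * c1 * c2 * tail_majorant (3 * \<delta>) A' m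
          \<le> 6 * c1 * c2 * ((1 + A') * ytail p (int m + 3 * \<delta>))"
        using c by (intro mult_left_mono) simp_all
      then show "ytail p (int m + \<delta>) + 6 * c1 * c2 * tail_majorant (3 * \<delta>) A' m
          \<le> C * ytail p (int m + 3 * \<delta>)"
        using mono(1) unfolding C_def by (simp add: algebra_simps)
    qed
    finally show ?thesis .
  qed
  moreover have "C > 0" using c A' by (simp add: C_def add_pos_nonneg)
  ultimately show ?thesis by blast
qed

end

section \<open>Conditioning on the past of an i.i.d. sequence\<close>

lemma nn_integral_indicator_split_countable:
  fixes W :: "'a \<Rightarrow> 'b::countable" and \<Phi> :: "'b \<Rightarrow> 'a \<Rightarrow> ennreal"
  assumes W: "W \<in> measurable M (count_space UNIV)" and B: "B \<in> sets M"
    and \<Phi>: "\<And>w. \<Phi> w \<in> borel_measurable M"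
  shows "(\<integral>\<^sup>+\<omega>. indicator B \<omega> * \<Phi> (W \<omega>) \<omega> \<partial>M)
       = (\<integral>\<^sup>+w. (\<integral>\<^sup>+\<omega>. indicator (B \<inter> W -` {w}) \<omega> * \<Phi> w \<omega> \<partial>M) \<partial>count_space UNIV)"
proof -
  have BW: "B \<inter> W -` {w} \<in> sets M" for w
  proof -
    have "B \<inter> W -` {w} = B \<inter> (W -` {w} \<inter> space M)" using sets.sets_into_space[OF B] by auto
    then show ?thesis using B W by (auto simp: measurable_count_space_eq2_countable)
  qed
  have "(\<integral>\<^sup>+w. (\<integral>\<^sup>+\<omega>. indicator (B \<inter> W -` {w}) \<omega> * \<Phi> w \<omega> \<partial>M) \<partial>count_space UNIV)
      = (\<integral>\<^sup>+\<omega>. (\<integral>\<^sup>+w. indicator (B \<inter> W -` {w}) \<omega> * \<Phi> w \<omega> \<partial>count_space UNIV) \<partial>M)"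
    by (rule nn_integral_count_space_nn_integral[symmetric]) (use BW \<Phi> in auto)
  also have "\<dots> = (\<integral>\<^sup>+\<omega>. indicator B \<omega> * \<Phi> (W \<omega>) \<omega> \<partial>M)"
  proof (rule nn_integral_cong)
    fix \<omega>
    have "(\<lambda>w. indicator (B \<inter> W -` {w}) \<omega> * \<Phi> w \<omega>) = (\<lambda>w. (indicator B \<omega> * \<Phi> (W \<omega>) \<omega>) * indicator {W \<omega>} w)"
      by (auto simp: fun_eq_iff split: split_indicator)
    then show "(\<integral>\<^sup>+w. indicator (B \<inter> W -` {w}) \<omega> * \<Phi> w \<omega> \<partial>count_space UNIV) = indicator B \<omega> * \<Phi> (W \<omega>) \<omega>"
      by simp
  qed
  finally show ?thesis ..
qed

lemma (in sigma_finite_subalgebra) nn_cond_exp_indep_countable: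
  fixes W :: "'a \<Rightarrow> 'b::countable" and Z :: "'a \<Rightarrow> 'c::countable" and c :: "'b \<Rightarrow> 'c \<Rightarrow> ennreal"
  assumes W: "W \<in> measurable F (count_space UNIV)" and Z: "Z \<in> measurable M (count_space UNIV)"
    and indep: "\<And>A z. A \<in> sets F \<Longrightarrow> emeasure M (A \<inter> Z -` {z}) = emeasure M A * q z"
  shows "AE \<omega> in M. nn_cond_exp M F (\<lambda>\<omega>. c (W \<omega>) (Z \<omega>)) \<omega> = (\<integral>\<^sup>+z. q z * c (W \<omega>) z \<partial>count_space UNIV)"
proof -
  define H where "H w = (\<integral>\<^sup>+z. q z * c w z \<partial>count_space UNIV)" for w
  have W_M: "W \<in> measurable M (count_space UNIV)" by (rule measurable_from_subalg[OF subalg W])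
  have sets_F: "A \<in> sets F \<Longrightarrow> A \<in> sets M" for A using subalg by (auto simp: subalgebra_def)
  have preimage: "A \<inter> V -` {v} \<in> sets N" if "A \<in> sets N" "V \<in> measurable N (count_space UNIV)"
    for A N and V :: "'a \<Rightarrow> 'd::countable" and v
  proof -
    have "A \<inter> V -` {v} = A \<inter> (V -` {v} \<inter> space N)" using sets.sets_into_space[OF that(1)] by auto
    then show ?thesis using that by (auto simp: measurable_count_space_eq2_countable)
  qed
  have indep_integral: "(\<integral>\<^sup>+\<omega>. indicator A \<omega> * c w (Z \<omega>) \<partial>M) = emeasure M A * H w"
    if A: "A \<in> sets F" for A w
  proof -
    have "(\<integral>\<^sup>+\<omega>. indicator A \<omega> * c w (Z \<omega>) \<partial>M)
        = (\<integral>\<^sup>+z. (\<integral>\<^sup>+\<omega>. indicator (A \<inter> Z -` {z}) \<omega> * c w z \<partial>M) \<partial>count_space UNIV)"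
      by (rule nn_integral_indicator_split_countable[OF Z sets_F[OF A], where \<Phi>="\<lambda>z \<omega>. c w z"]) simp
    also have "\<dots> = (\<integral>\<^sup>+z. emeasure M A * (q z * c w z) \<partial>count_space UNIV)"
      using indep[OF A] preimage[OF sets_F[OF A] Z]
      by (intro nn_integral_cong) (simp add: nn_integral_cmult_indicator ac_simps)
    also have "\<dots> = emeasure M A * H w"
      unfolding H_def by (rule nn_integral_cmult) simp
    finally show ?thesis .
  qed
  have "AE \<omega> in M. H (W \<omega>) = nn_cond_exp M F (\<lambda>\<omega>. c (W \<omega>) (Z \<omega>)) \<omega>"
  proof (rule nn_cond_exp_charact)
    show "(\<lambda>\<omega>. c (W \<omega>) (Z \<omega>)) \<in> borel_measurable M"
      by (rule measurable_compose_countable[OF _ W_M]) (rule measurable_compose[OF Z], simp)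
    show "(\<lambda>\<omega>. H (W \<omega>)) \<in> borel_measurable F"
      by (rule measurable_compose[OF W]) simp
    fix A assume A: "A \<in> sets F"
    have "(\<integral>\<^sup>+\<omega>\<in>A. c (W \<omega>) (Z \<omega>) \<partial>M)
        = (\<integral>\<^sup>+w. (\<integral>\<^sup>+\<omega>. indicator (A \<inter> W -` {w}) \<omega> * c w (Z \<omega>) \<partial>M) \<partial>count_space UNIV)"
      using nn_integral_indicator_split_countable[OF W_M sets_F[OF A], where \<Phi>="\<lambda>w \<omega>. c w (Z \<omega>)"] Z
      by (simp add: mult.commute)
    also have "\<dots> = (\<integral>\<^sup>+w. (\<integral>\<^sup>+\<omega>. indicator (A \<inter> W -` {w}) \<omega> * H w \<partial>M) \<partial>count_space UNIV)"
    proof (rule nn_integral_cong)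
      fix w
      have "(\<integral>\<^sup>+\<omega>. indicator (A \<inter> W -` {w}) \<omega> * c w (Z \<omega>) \<partial>M) = emeasure M (A \<inter> W -` {w}) * H w"
        by (rule indep_integral[OF preimage[OF A W]])
      then show "(\<integral>\<^sup>+\<omega>. indicator (A \<inter> W -` {w}) \<omega> * c w (Z \<omega>) \<partial>M)
          = (\<integral>\<^sup>+\<omega>. indicator (A \<inter> W -` {w}) \<omega> * H w \<partial>M)"
        using preimage[OF sets_F[OF A] W_M] by (simp add: nn_integral_cmult_indicator mult.commute)
    qed
    also have "\<dots> = (\<integral>\<^sup>+\<omega>\<in>A. H (W \<omega>) \<partial>M)"
      using nn_integral_indicator_split_countable[OF W_M sets_F[OF A], where \<Phi>="\<lambda>w \<omega>. H w"]
      by (simp add: mult.commute)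
    finally show "(\<integral>\<^sup>+\<omega>\<in>A. c (W \<omega>) (Z \<omega>) \<partial>M) = (\<integral>\<^sup>+\<omega>\<in>A. H (W \<omega>) \<partial>M)" .
  qed
  then show ?thesis unfolding H_def by (auto elim: AE_mp)
qed

lemma Mx_measurable:
  assumes "\<And>i. i \<in> {1..n} \<Longrightarrow> X i \<in> measurable N (count_space UNIV)"
  shows "Mx X n \<in> measurable N (count_space UNIV)"
  using assms
proof (induction n)
  case (Suc n)
  then have "Mx X n \<in> measurable N (count_space UNIV)" "X (Suc n) \<in> measurable N (count_space UNIV)"
    by auto
  then have "(\<lambda>\<omega>. max (Mx X n \<omega>) (X (Suc n) \<omega>)) \<in> measurable N (count_space UNIV)"
    by measurable
  then show ?case by (simp add: Mx_Suc[abs_def])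
qed (simp add: Mx_def[abs_def])

context
  fixes M :: "'a measure" and X :: "nat \<Rightarrow> 'a \<Rightarrow> nat" and n :: nat
  assumes X_meas: "\<And>i. i \<in> {1..n} \<Longrightarrow> X i \<in> measurable M (count_space UNIV)"
begin

lemma natfilt_generator_subset: "(\<Union>i\<in>{1..n}. {X i -` A \<inter> space M | A. True}) \<subseteq> sets M"
  using X_meas by (auto intro: measurable_sets)

lemma space_natfilt: "space (natfilt M X n) = space M"
  using natfilt_generator_subset sets.sets_into_space unfolding natfilt_def by (simp add: space_measure_of_conv)

lemma sets_natfilt:
  "sets (natfilt M X n) = sigma_sets (space M) (\<Union>i\<in>{1..n}. {X i -` A \<inter> space M | A. True})"
  using natfilt_generator_subset sets.sets_into_space unfolding natfilt_def
  by (intro sets_measure_of) blast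

lemma subalgebra_natfilt: "subalgebra M (natfilt M X n)"
  unfolding subalgebra_def space_natfilt sets_natfilt
  using natfilt_generator_subset by (simp add: sets.sigma_sets_subset)

lemma Mx_measurable_natfilt: "Mx X n \<in> measurable (natfilt M X n) (count_space UNIV)"
proof (rule Mx_measurable, rule measurableI)
  fix i A assume "i \<in> {1..n}"
  then have "X i -` A \<inter> space M \<in> (\<Union>i\<in>{1..n}. {X i -` A \<inter> space M | A. True})" by blast
  then show "X i -` A \<inter> space (natfilt M X n) \<in> sets (natfilt M X n)"
    unfolding space_natfilt sets_natfilt by auto
qed auto

end

lemma (in prob_space) emeasure_natfilt_inter_next:
  assumes X_meas: "\<And>i. i \<ge> 1 \<Longrightarrow> X i \<in> measurable M (count_space UNIV)"
    and indep: "indep_vars (\<lambda>_. count_space UNIV) X {1..}"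
    and A: "A \<in> sets (natfilt M X n)"
  shows "emeasure M (A \<inter> X (Suc n) -` {x}) = emeasure M A * emeasure M (X (Suc n) -` {x} \<inter> space M)"
proof -
  define E where "E i = {X i -` B \<inter> space M | B. B \<in> sets (count_space (UNIV::nat set))}" for i
  define I where "I = case_bool {1..n} {Suc n}"
  have "indep_sets E {1..}" using indep unfolding indep_vars_def2 E_def by simp
  then have "indep_sets E (\<Union>j. I j)"
    by (rule indep_sets_mono_index[rotated]) (auto simp: I_def split: bool.splits)
  then have "indep_sets (\<lambda>j. sigma_sets (space M) (\<Union>i\<in>I j. E i)) UNIV"
  proof (rule indep_sets_collect_sigma)
    show "Int_stable (E i)" for i
      unfolding E_def Int_stable_def by (auto intro: exI[of _ "_ \<inter> _"])
    show "disjoint_family_on I UNIV"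
      unfolding disjoint_family_on_def I_def by (auto split: bool.split)
  qed
  moreover have "(\<lambda>j. sigma_sets (space M) (\<Union>i\<in>I j. E i))
      = case_bool (sigma_sets (space M) (\<Union>i\<in>{1..n}. E i)) (sigma_sets (space M) (E (Suc n)))"
    by (rule ext) (simp add: I_def split: bool.split)
  ultimately have indep_past:
    "indep_set (sigma_sets (space M) (\<Union>i\<in>{1..n}. E i)) (sigma_sets (space M) (E (Suc n)))"
    unfolding indep_set_def by simp
  have A_M: "A \<in> sets M"
    using subalgebra_natfilt[of n X M] A X_meas by (auto simp: subalgebra_def)
  have "A \<in> sigma_sets (space M) (\<Union>i\<in>{1..n}. E i)"
    using A sets_natfilt[of n X M] X_meas unfolding E_def by auto
  moreover have "X (Suc n) -` {x} \<inter> space M \<in> sigma_sets (space M) (E (Suc n))"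
    unfolding E_def by (intro sigma_sets.Basic) auto
  ultimately have "prob (A \<inter> (X (Suc n) -` {x} \<inter> space M)) = prob A * prob (X (Suc n) -` {x} \<inter> space M)"
    by (rule indep_setD[OF indep_past])
  moreover have "A \<inter> (X (Suc n) -` {x} \<inter> space M) = A \<inter> X (Suc n) -` {x}"
    using sets.sets_into_space[OF A_M] by auto
  ultimately show ?thesis
    by (simp add: emeasure_eq_measure ennreal_mult)
qed

lemma (in prob_space) prob_preimage_sums:
  fixes Y :: "'a \<Rightarrow> nat"
  assumes "Y \<in> measurable M (count_space UNIV)"
  shows "(\<lambda>k. prob (Y -` {k} \<inter> space M)) sums 1"
proof -
  have "(\<lambda>k. prob (Y -` {k} \<inter> space M)) sums prob (\<Union>k. Y -` {k} \<inter> space M)"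
    using assms by (intro finite_measure_UNION) (auto simp: disjoint_family_on_def intro: measurable_sets)
  moreover have "(\<Union>k. Y -` {k} \<inter> space M) = space M" by auto
  ultimately show ?thesis by (simp add: prob_space)
qed

lemma (in prob_space) nn_cond_exp_iid_next:
  fixes X :: "nat \<Rightarrow> 'a \<Rightarrow> nat" and c :: "nat \<Rightarrow> nat \<Rightarrow> ennreal"
  assumes X_meas: "\<And>i. i \<ge> 1 \<Longrightarrow> X i \<in> measurable M (count_space UNIV)"
    and indep: "indep_vars (\<lambda>_. count_space UNIV) X {1..}"
    and ident: "\<And>i. i \<ge> 1 \<Longrightarrow> distr M (count_space UNIV) (X i) = distr M (count_space UNIV) (X 1)"
  shows "AE \<omega> in M. nn_cond_exp M (natfilt M X n) (\<lambda>\<omega>. c (Mx X n \<omega>) (X (Suc n) \<omega>)) \<omega>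
           = (\<integral>\<^sup>+x. emeasure M (X 1 -` {x} \<inter> space M) * c (Mx X n \<omega>) x \<partial>count_space UNIV)"
proof -
  interpret finite_measure_subalgebra M "natfilt M X n"
    by unfold_locales (use subalgebra_natfilt[of n X M] X_meas in auto)
  have law: "emeasure M (X (Suc n) -` {x} \<inter> space M) = emeasure M (X 1 -` {x} \<inter> space M)" for x
  proof -
    have "emeasure M (X (Suc n) -` {x} \<inter> space M) = emeasure (distr M (count_space UNIV) (X (Suc n))) {x}"
      using X_meas[of "Suc n"] by (simp add: emeasure_distr)
    also have "\<dots> = emeasure (distr M (count_space UNIV) (X 1)) {x}"
      using ident[of "Suc n"] by simp
    also have "\<dots> = emeasure M (X 1 -` {x} \<inter> space M)"
      using X_meas[of 1] by (simp add: emeasure_distr)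
    finally show ?thesis .
  qed
  show ?thesis
    using emeasure_natfilt_inter_next[OF X_meas indep] X_meas
    by (intro nn_cond_exp_indep_countable Mx_measurable_natfilt) (auto simp: law)
qed

lemma (in prob_space) nn_cond_exp_xi_cube:
  assumes "pos_nat_distribution p"
    and X_meas: "\<And>i. i \<ge> 1 \<Longrightarrow> X i \<in> measurable M (count_space UNIV)"
    and indep: "indep_vars (\<lambda>_. count_space UNIV) X {1..}"
    and ident: "\<And>i. i \<ge> 1 \<Longrightarrow> distr M (count_space UNIV) (X i) = distr M (count_space UNIV) (X 1)"
    and law: "\<And>x. emeasure M (X 1 -` {x} \<inter> space M) = ennreal (p x)"
    and "k \<ge> 1"
  shows "AE \<omega> in M. nn_cond_exp M (natfilt M X (k - 1)) (\<lambda>\<omega>. ennreal (\<bar>xi p X \<delta> k \<omega>\<bar> ^ 3)) \<omega>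
           = pos_nat_distribution.cube_moment p \<delta> (Mx X (k - 1) \<omega>)"
proof -
  interpret pos_nat_distribution p by fact
  obtain n where k: "k = Suc n" using \<open>k \<ge> 1\<close> by (cases k) auto
  have "(\<lambda>\<omega>. ennreal (\<bar>xi p X \<delta> k \<omega>\<bar> ^ 3))
      = (\<lambda>\<omega>. (\<lambda>m x. ennreal (\<bar>xi_val \<delta> m x\<bar> ^ 3)) (Mx X n \<omega>) (X (Suc n) \<omega>))"
    using xi_eq_xi_val[of k X \<delta>] k by simp
  then show ?thesis
    using nn_cond_exp_iid_next[OF X_meas indep ident, of n "\<lambda>m x. ennreal (\<bar>xi_val \<delta> m x\<bar> ^ 3)"] law
    by (simp add: k nn_integral_xi_val_cube)
qed

lemma (in prob_space) nn_cond_exp_xi_cube_le: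
  assumes "pos_nat_distribution p"
    and "\<And>i. i \<ge> 1 \<Longrightarrow> X i \<in> measurable M (count_space UNIV)"
    and "indep_vars (\<lambda>_. count_space UNIV) X {1..}"
    and "\<And>i. i \<ge> 1 \<Longrightarrow> distr M (count_space UNIV) (X i) = distr M (count_space UNIV) (X 1)"
    and "\<And>x. emeasure M (X 1 -` {x} \<inter> space M) = ennreal (p x)"
    and bound: "\<And>m. pos_nat_distribution.cube_moment p \<delta> m \<le> ennreal (C0 * B m)"
    and "C0 \<le> C" and B: "\<And>m. B m \<ge> 0"
  shows "\<forall>k\<ge>1. AE \<omega> in M. nn_cond_exp M (natfilt M X (k - 1)) (\<lambda>\<omega>. ennreal (\<bar>xi p X \<delta> k \<omega>\<bar> ^ 3)) \<omega>
      \<le> ennreal (C * B (Mx X (k - 1) \<omega>))"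
proof (intro allI impI)
  fix k :: nat assume "k \<ge> 1"
  have le_C: "pos_nat_distribution.cube_moment p \<delta> m \<le> ennreal (C * B m)" for m
    using bound[of m] mult_right_mono[OF \<open>C0 \<le> C\<close> B] by (meson ennreal_leI order_trans)
  show "AE \<omega> in M. nn_cond_exp M (natfilt M X (k - 1)) (\<lambda>\<omega>. ennreal (\<bar>xi p X \<delta> k \<omega>\<bar> ^ 3)) \<omega>
      \<le> ennreal (C * B (Mx X (k - 1) \<omega>))"
    using nn_cond_exp_xi_cube[OF assms(1-5) \<open>k \<ge> 1\<close>, of \<delta>]
  proof (rule eventually_mono)
    fix \<omega> assume "nn_cond_exp M (natfilt M X (k - 1)) (\<lambda>\<omega>. ennreal (\<bar>xi p X \<delta> k \<omega>\<bar> ^ 3)) \<omega>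
        = pos_nat_distribution.cube_moment p \<delta> (Mx X (k - 1) \<omega>)"
    then show "nn_cond_exp M (natfilt M X (k - 1)) (\<lambda>\<omega>. ennreal (\<bar>xi p X \<delta> k \<omega>\<bar> ^ 3)) \<omega>
        \<le> ennreal (C * B (Mx X (k - 1) \<omega>))"
      using le_C[of "Mx X (k - 1) \<omega>"] by simp
  qed
qed

theorem proposition2p3:
  fixes M :: "'a measure" and X :: "nat \<Rightarrow> 'a \<Rightarrow> nat" and p :: "nat \<Rightarrow> real" and \<delta> :: int
  assumes "prob_space M"
    and "\<And>n. n \<ge> 1 \<Longrightarrow> X n \<in> measurable M (count_space UNIV)"
    and "prob_space.indep_vars M (\<lambda>_. count_space UNIV) X {1..}"
    and "\<And>n. n \<ge> 1 \<Longrightarrow> distr M (count_space UNIV) (X n) = distr M (count_space UNIV) (X 1)"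
    and "\<And>k. p k = measure M {\<omega> \<in> space M. X 1 \<omega> = k}"
    and "\<And>k. p k > 0"
  shows "\<exists>C>0.
     ((\<delta> < 0 \<and> limsup (\<lambda>k. ereal (rr p k)) < 1) \<longrightarrow>
        (\<forall>k\<ge>1. AE \<omega> in M. nn_cond_exp M (natfilt M X (k - 1)) (\<lambda>\<omega>. ennreal (\<bar>xi p X \<delta> k \<omega>\<bar> ^ 3)) \<omega>
                  \<le> ennreal (C * ytail p (int (Mx X (k - 1) \<omega>))))) \<and>
     ((\<delta> < 0 \<and> (rr p \<longlonglongrightarrow> 1) \<and> ((\<lambda>k. (1 - rr p (Suc k)) / (1 - rr p k)) \<longlonglongrightarrow> 1)) \<longrightarrow>
        (\<forall>k\<ge>1. AE \<omega> in M. nn_cond_exp M (natfilt M X (k - 1)) (\<lambda>\<omega>. ennreal (\<bar>xi p X \<delta> k \<omega>\<bar> ^ 3)) \<omega>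
                  \<le> ennreal (C * ytail p (int (Mx X (k - 1) \<omega>) + 3 * \<delta>)))) \<and>
     (\<delta> > 0 \<longrightarrow>
        (\<forall>k\<ge>1. AE \<omega> in M. nn_cond_exp M (natfilt M X (k - 1)) (\<lambda>\<omega>. ennreal (\<bar>xi p X \<delta> k \<omega>\<bar> ^ 3)) \<omega>
                  \<le> ennreal (C * ytail p (int (Mx X (k - 1) \<omega>) + \<delta>))))"
proof -
  interpret prob_space M by fact
  have prob_eq: "prob (X 1 -` {x} \<inter> space M) = p x" for x
    using assms(5) by (simp add: vimage_def Int_def conj_commute)
  then have law: "emeasure M (X 1 -` {x} \<inter> space M) = ennreal (p x)" for x
    by (simp add: emeasure_eq_measure)
  have "X 1 \<in> measurable M (count_space UNIV)" using assms(2) by simp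
  from prob_preimage_sums[OF this] interpret pd: pos_nat_distribution p
    using assms(6) prob_eq by unfold_locales simp_all
  note bound = nn_cond_exp_xi_cube_le[OF pd.pos_nat_distribution_axioms assms(2-4) law]
  obtain Ca where "Ca > 0" and Ca: "\<delta> < 0 \<and> limsup (\<lambda>k. ereal (rr p k)) < 1
      \<Longrightarrow> \<forall>m. pd.cube_moment \<delta> m \<le> ennreal (Ca * ytail p (int m))"
    using pd.cube_moment_le_of_limsup_rr by (metis zero_less_one)
  obtain Cb where "Cb > 0" and Cb: "\<delta> < 0 \<and> (rr p \<longlonglongrightarrow> 1) \<and> ((\<lambda>k. (1 - rr p (Suc k)) / (1 - rr p k)) \<longlonglongrightarrow> 1)
      \<Longrightarrow> \<forall>m. pd.cube_moment \<delta> m \<le> ennreal (Cb * ytail p (int m + 3 * \<delta>))"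
    using pd.cube_moment_le_of_rr_regular by (metis zero_less_one)
  have y_nonneg: "ytail p j \<ge> 0" for j by (simp add: less_imp_le pd.ytail_pos)
  show ?thesis
    using \<open>Ca > 0\<close> Ca Cb pd.cube_moment_le_pos_shift y_nonneg
    by (intro exI[of _ "max Ca (max Cb 7)"] conjI impI bound) auto
qed

end
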